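(* Let $\gamma<1$, $\gamma\neq 0$. The following two conditions are equivalent. (A) For all $\gamma'\in(\gamma,1)$, $$\lim_{x\uparrow\infty}\frac{u_0'(x)}{x^{\gamma'-1}}=0,$$ and for all $\gamma''<\gamma$, $$\lim_{x\uparrow\infty}\frac{u_0'(x)}{x^{\gamma''-1}}=\infty.$$ (B) $u_0'$ varies regularly at infinity with exponent $\gamma-1$, i.e. for all $k>0$, $$\lim_{x\uparrow\infty}\frac{u_0'(kx)}{u_0'(x)}=k^{\gamma-1}.$$
   Context: Let $\mu$ be a nonzero finite positive Borel measure on $(0,\infty)$ such that $\int y e^{yz}\mu(dy)<\infty$ for every $z\in\mathbb{R}$. Define $h(z,t):=\int e^{yz-\frac12 y^2 t}\mu(dy)$ for $(z,t)\in\mathbb{R}\times[0,\infty)$. Let $u:(0,\infty)\times[0,\infty)\to\mathbb{R}$ be smooth, strictly increasing and strictly concave in $x$, solving $u_t=\frac12 u_x^2/u_{xx}$, and related to $h$ by $u_x(h(z,t),t)=e^{-z+t/2}$ for all $(z,t)$. Write $u_0(x):=u(x,0)$; its derivative $u_0'$ is positive. *)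

theory Defs
  imports "HOL-Analysis.Analysis" "HOL-Probability.Probability"
begin

definition strict_concave_on :: "real set \<Rightarrow> (real \<Rightarrow> real) \<Rightarrow> bool" where
  "strict_concave_on S f \<longleftrightarrow>
     (\<forall>x\<in>S. \<forall>y\<in>S. \<forall>a::real. x \<noteq> y \<and> 0 < a \<and> a < 1 \<longrightarrow>
        f (a * x + (1 - a) * y) > a * f x + (1 - a) * f y)"

text \<open>C-infinity smoothness of a function of two real variables on a set S
  (derivatives taken within S, so boundary points are allowed): there is a family
  D of all iterated partial derivatives, indexed by lists of directions
  (False = first variable, True = second variable), with D [] = f and every
  member Frechet differentiable within S with partials given by the family.\<close>
definition smooth2_on :: "(real \<times> real) set \<Rightarrow> (real \<times> real \<Rightarrow> real) \<Rightarrow> bool" where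
  "smooth2_on S f \<longleftrightarrow>
     (\<exists>D :: bool list \<Rightarrow> real \<times> real \<Rightarrow> real. D [] = f \<and>
        (\<forall>ds. \<forall>p\<in>S. (D ds has_derivative
            (\<lambda>v. fst v * D (False # ds) p + snd v * D (True # ds) p)) (at p within S)))"

definition hfun :: "real measure \<Rightarrow> real \<Rightarrow> real \<Rightarrow> real" where
  "hfun \<mu> z t = (\<integral>y. exp (y * z - y\<^sup>2 * t / 2) \<partial>\<mu>)"

end

theory Submission
  imports Defs "HOL-Real_Asymp.Real_Asymp"
begin

text \<open>Write \<open>f = u\<^sub>x(\<cdot>, 0)\<close> and \<open>G(s) = -ln f(e\<^sup>s)\<close>. In these coordinates (A) says
  \<open>G(s)/s \<rightarrow> 1 - \<gamma>\<close> and (B) says \<open>G(s + a) - G(s) \<rightarrow> (1 - \<gamma>) a\<close> for every \<open>a\<close>. For a concave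
  increasing \<open>G\<close> the two are equivalent: concavity squeezes the increment between the chord slopes
  over \<open>[s/2, s]\<close> and \<open>[s, 2s]\<close>, and monotonicity lets a Cesaro argument recover \<open>G(s)/s\<close> from
  the increments. Concavity of \<open>G\<close> comes from the relation \<open>u\<^sub>x(h(z, 0), 0) = e\<^sup>-\<^sup>z\<close>: it makes
  \<open>G\<close> the inverse of the increasing convex log-Laplace transform \<open>z \<mapsto> ln \<integral> e\<^sup>y\<^sup>z \<mu>(dy)\<close>.
  Only this relation and the monotonicity and strict concavity of \<open>u(\<cdot>, 0)\<close> are used.\<close>

section \<open>Slopes and increments of concave functions\<close>

lemma concave_on_slope_antimono:
  fixes G :: "real \<Rightarrow> real"
  assumes conc: "concave_on I G" and I: "p \<in> I" "r \<in> I" and pqr: "p < q" "q < r"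
  shows "(G r - G q) / (r - q) \<le> (G q - G p) / (q - p)"
proof -
  have "convex_on I (\<lambda>x. - G x)" using conc by (simp add: concave_on_def)
  from convex_on_slope_le[OF this I pqr]
  have "(- G p - - G q) / (p - q) \<le> (- G q - - G r) / (q - r)" by (rule order_trans)
  moreover have "(- G p - - G q) / (p - q) = - ((G q - G p) / (q - p))"
    and "(- G q - - G r) / (q - r) = - ((G r - G q) / (r - q))"
    using pqr by (simp_all add: field_simps)
  ultimately show ?thesis by linarith
qed

lemma concave_difference_quotient_tendsto:
  fixes G :: "real \<Rightarrow> real"
  assumes conc: "concave_on UNIV G" and lim: "((\<lambda>s. G s / s) \<longlongrightarrow> c) at_top" and a: "a > 0"
  shows "((\<lambda>s. (G (s + a) - G s) / a) \<longlongrightarrow> c) at_top"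
proof (rule tendsto_sandwich)
  have lim_at: "((\<lambda>s. G (h s) / h s) \<longlongrightarrow> c) at_top"
    if "filterlim h at_top at_top" for h :: "real \<Rightarrow> real"
    using filterlim_compose[OF lim that] .
  have "((\<lambda>s. G (2 * s) / (2 * s) * (2 * s / (s - a)) - G (s + a) / (s + a) * ((s + a) / (s - a)))
          \<longlongrightarrow> c * 2 - c * 1) at_top" (is "(?L \<longlongrightarrow> _) _")
    by (intro tendsto_intros lim_at) real_asymp+
  moreover have "eventually (\<lambda>s. ?L s = (G (2 * s) - G (s + a)) / (2 * s - (s + a))) at_top"
    using eventually_gt_at_top[of a]
  proof eventually_elim
    case (elim s)
    then have "s \<noteq> 0" "s - a \<noteq> 0" "s + a \<noteq> 0" using a by auto
    then have e1: "G (2 * s) / (2 * s) * (2 * s / (s - a)) = G (2 * s) / (s - a)"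
      and e2: "G (s + a) / (s + a) * ((s + a) / (s - a)) = G (s + a) / (s - a)" by simp_all
    have d: "2 * s - (s + a) = s - a" by simp
    show ?case unfolding e1 e2 d by (rule diff_divide_distrib[symmetric])
  qed
  ultimately have "((\<lambda>s. (G (2 * s) - G (s + a)) / (2 * s - (s + a))) \<longlongrightarrow> c * 2 - c * 1) at_top"
    by (rule Lim_transform_eventually)
  then show "((\<lambda>s. (G (2 * s) - G (s + a)) / (2 * s - (s + a))) \<longlongrightarrow> c) at_top"
    by (simp only: mult_2_right mult_1_right add_diff_cancel)
  have "((\<lambda>s. 2 * (G s / s) - G (s / 2) / (s / 2)) \<longlongrightarrow> 2 * c - c) at_top" (is "(?U \<longlongrightarrow> _) _")
    by (intro tendsto_intros lim lim_at) real_asymp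
  moreover have "eventually (\<lambda>s. ?U s = (G s - G (s / 2)) / (s - s / 2)) at_top"
    using eventually_gt_at_top[of 0] by eventually_elim (simp add: field_simps)
  ultimately have "((\<lambda>s. (G s - G (s / 2)) / (s - s / 2)) \<longlongrightarrow> 2 * c - c) at_top"
    by (rule Lim_transform_eventually)
  then show "((\<lambda>s. (G s - G (s / 2)) / (s - s / 2)) \<longlongrightarrow> c) at_top"
    by (simp only: mult_2 add_diff_cancel)
  have shift: "s + a - s = a" for s by simp
  show "eventually (\<lambda>s. (G (2 * s) - G (s + a)) / (2 * s - (s + a)) \<le> (G (s + a) - G s) / a) at_top"
    using eventually_gt_at_top[of a]
  proof eventually_elim
    case (elim s)
    have "s < s + a" "s + a < 2 * s" using elim a by auto
    from concave_on_slope_antimono[OF conc UNIV_I UNIV_I this]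
    show ?case by (simp only: shift)
  qed
  show "eventually (\<lambda>s. (G (s + a) - G s) / a \<le> (G s - G (s / 2)) / (s - s / 2)) at_top"
    using eventually_gt_at_top[of 0]
  proof eventually_elim
    case (elim s)
    have "s / 2 < s" "s < s + a" using elim a by auto
    from concave_on_slope_antimono[OF conc UNIV_I UNIV_I this]
    show ?case by (simp only: shift)
  qed
qed

lemma concave_increment_tendsto:
  fixes G :: "real \<Rightarrow> real"
  assumes conc: "concave_on UNIV G" and lim: "((\<lambda>s. G s / s) \<longlongrightarrow> c) at_top"
  shows "((\<lambda>s. G (s + a) - G s) \<longlongrightarrow> c * a) at_top"
proof -
  have quotient: "((\<lambda>s. (G (s + a) - G s) / a) \<longlongrightarrow> c) at_top" if "a \<noteq> 0"
  proof (cases "a > 0")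
    case True
    then show ?thesis by (rule concave_difference_quotient_tendsto[OF conc lim])
  next
    case False
    have "filterlim (\<lambda>s. s + a) at_top at_top" by real_asymp
    from filterlim_compose[OF concave_difference_quotient_tendsto[OF conc lim, of "- a"] this]
    have "((\<lambda>s. (G (s + a + - a) - G (s + a)) / - a) \<longlongrightarrow> c) at_top"
      using False that by simp
    moreover have "(G (s + a + - a) - G (s + a)) / - a = (G (s + a) - G s) / a" for s
      by (simp add: minus_divide_left)
    ultimately show ?thesis by simp
  qed
  show ?thesis
  proof (cases "a = 0")
    case False
    from tendsto_mult_left[OF quotient[OF False], of a] show ?thesis
      using False by (simp add: mult.commute)
  qed simp
qed

lemma increment_bound_imp_linear_bound:
  fixes G :: "real \<Rightarrow> real"
  assumes step: "\<And>s. S \<le> s \<Longrightarrow> G (s + 1) \<le> G s + e"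
    and bound: "\<And>s. S \<le> s \<Longrightarrow> s \<le> S + 1 \<Longrightarrow> G s \<le> B"
    and s: "S \<le> s"
  shows "G s \<le> B + \<bar>e\<bar> + (s - S) * e"
proof -
  have iterate: "G (t + real n) \<le> G t + real n * e" if "S \<le> t" for t n
  proof (induction n)
    case (Suc n)
    have "G (t + real (Suc n)) = G ((t + real n) + 1)" by (simp add: algebra_simps)
    also have "\<dots> \<le> G (t + real n) + e" using step that by simp
    finally show ?case using Suc by (simp add: algebra_simps)
  qed simp
  define n where "n = nat \<lfloor>s - S\<rfloor>"
  have n: "S \<le> s - real n" "s - real n \<le> S + 1"
    using s unfolding n_def by linarith+
  have "\<bar>real n * e - (s - S) * e\<bar> \<le> \<bar>e\<bar>"
  proof -
    have "\<bar>real n - (s - S)\<bar> \<le> 1" using n by linarith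
    then have "\<bar>real n - (s - S)\<bar> * \<bar>e\<bar> \<le> \<bar>e\<bar>" by (simp add: mult_left_le_one_le)
    then show ?thesis by (simp add: abs_mult [symmetric] left_diff_distrib)
  qed
  moreover have "G s \<le> G (s - real n) + real n * e" using iterate[OF n(1), of n] by simp
  moreover have "G (s - real n) \<le> B" using bound n by blast
  ultimately show ?thesis by linarith
qed

lemma eventually_quotient_less_if_increment_less:
  fixes G :: "real \<Rightarrow> real"
  assumes step: "eventually (\<lambda>s. G (s + 1) - G s < e) at_top"
    and bdd: "\<And>S. bdd_above (G ` {S..S + 1})"
    and "e < b"
  shows "eventually (\<lambda>s. G s / s < b) at_top"
proof -
  obtain S where S: "\<And>s. S \<le> s \<Longrightarrow> G (s + 1) - G s < e"
    using step by (auto simp: eventually_at_top_linorder)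
  obtain B where B: "\<forall>s\<in>{S..S + 1}. G s \<le> B"
    using bdd[of S] by (auto simp: bdd_above_def)
  define K where "K = B + \<bar>e\<bar> - S * e"
  have "((\<lambda>s. K / s + e) \<longlongrightarrow> e) at_top" by real_asymp
  then have "eventually (\<lambda>s. K / s + e < b) at_top" using \<open>e < b\<close> by (rule order_tendstoD)
  moreover have "eventually (\<lambda>s. s > max S 0) at_top" by (rule eventually_gt_at_top)
  ultimately show ?thesis
  proof eventually_elim
    case (elim s)
    then have "G s \<le> K + s * e"
      using increment_bound_imp_linear_bound[of S G e B s] S B by (force simp: K_def algebra_simps)
    then have "G s / s \<le> K / s + e" using elim by (simp add: field_simps)
    then show ?case using elim by linarith
  qed
qed

lemma mono_increment_tendsto_imp_slope_tendsto:
  fixes G :: "real \<Rightarrow> real"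
  assumes mono: "mono G" and lim: "((\<lambda>s. G (s + 1) - G s) \<longlongrightarrow> c) at_top"
  shows "((\<lambda>s. G s / s) \<longlongrightarrow> c) at_top"
proof (rule order_tendstoI)
  fix b assume "c < b"
  show "eventually (\<lambda>s. G s / s < b) at_top"
  proof (rule eventually_quotient_less_if_increment_less)
    show "eventually (\<lambda>s. G (s + 1) - G s < (c + b) / 2) at_top"
      using \<open>c < b\<close> by (intro order_tendstoD(2)[OF lim]) simp
    show "bdd_above (G ` {S..S + 1})" for S
      by (rule bdd_aboveI[of _ "G (S + 1)"]) (auto intro: monoD[OF mono])
  qed (use \<open>c < b\<close> in simp)
next
  fix a assume "a < c"
  have "eventually (\<lambda>s. - G s / s < - a) at_top"
  proof (rule eventually_quotient_less_if_increment_less)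
    have "eventually (\<lambda>s. (a + c) / 2 < G (s + 1) - G s) at_top"
      using \<open>a < c\<close> by (intro order_tendstoD(1)[OF lim]) simp
    then show "eventually (\<lambda>s. - G (s + 1) - - G s < - ((a + c) / 2)) at_top"
      by eventually_elim linarith
    show "bdd_above ((\<lambda>s. - G s) ` {S..S + 1})" for S
      by (rule bdd_aboveI[of _ "- G S"]) (auto intro: monoD[OF mono])
  qed (use \<open>a < c\<close> in simp)
  then show "eventually (\<lambda>s. a < G s / s) at_top" by eventually_elim simp
qed

lemma concave_mono_increment_tendsto_iff:
  fixes G :: "real \<Rightarrow> real"
  assumes "concave_on UNIV G" and "mono G"
  shows "(\<forall>a. ((\<lambda>s. G (s + a) - G s) \<longlongrightarrow> c * a) at_top) \<longleftrightarrow> ((\<lambda>s. G s / s) \<longlongrightarrow> c) at_top"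
proof
  assume "\<forall>a. ((\<lambda>s. G (s + a) - G s) \<longlongrightarrow> c * a) at_top"
  then have "((\<lambda>s. G (s + 1) - G s) \<longlongrightarrow> c) at_top" by (metis mult_1_right)
  then show "((\<lambda>s. G s / s) \<longlongrightarrow> c) at_top" by (rule mono_increment_tendsto_imp_slope_tendsto[OF assms(2)])
qed (use concave_increment_tendsto[OF assms(1)] in blast)

section \<open>Power bounds and regular variation in logarithmic coordinates\<close>

lemma slope_tendsto_iff_exp_bounds:
  fixes G :: "real \<Rightarrow> real"
  assumes c: "c > 0"
  shows "((\<lambda>s. G s / s) \<longlongrightarrow> c) at_top \<longleftrightarrow>
    (\<forall>q. 0 < q \<and> q < c \<longrightarrow> ((\<lambda>s. exp (q * s - G s)) \<longlongrightarrow> 0) at_top) \<and>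
    (\<forall>q. c < q \<longrightarrow> filterlim (\<lambda>s. exp (q * s - G s)) at_top at_top)"
proof safe
  assume lim: "((\<lambda>s. G s / s) \<longlongrightarrow> c) at_top"
  have linear: "eventually (\<lambda>s. (q - G s / s) * s = q * s - G s) at_top" for q
    using eventually_gt_at_top[of 0] by eventually_elim (simp add: field_simps)
  fix q
  assume "q < c"
  have "filterlim (\<lambda>s. (q - G s / s) * s) at_bot at_top"
    by (rule filterlim_tendsto_neg_mult_at_bot[OF tendsto_diff[OF tendsto_const lim]])
       (use \<open>q < c\<close> in \<open>auto simp: filterlim_ident\<close>)
  then have "filterlim (\<lambda>s. q * s - G s) at_bot at_top"
    using filterlim_cong[OF refl refl linear] by simp
  then show "((\<lambda>s. exp (q * s - G s)) \<longlongrightarrow> 0) at_top"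
    by (rule filterlim_compose[OF exp_at_bot])
next
  assume lim: "((\<lambda>s. G s / s) \<longlongrightarrow> c) at_top"
  have linear: "eventually (\<lambda>s. (q - G s / s) * s = q * s - G s) at_top" for q
    using eventually_gt_at_top[of 0] by eventually_elim (simp add: field_simps)
  fix q
  assume "c < q"
  have "filterlim (\<lambda>s. (q - G s / s) * s) at_top at_top"
    by (rule filterlim_tendsto_pos_mult_at_top[OF tendsto_diff[OF tendsto_const lim]])
       (use \<open>c < q\<close> in \<open>auto simp: filterlim_ident\<close>)
  then have "filterlim (\<lambda>s. q * s - G s) at_top at_top"
    using filterlim_cong[OF refl refl linear] by simp
  then show "filterlim (\<lambda>s. exp (q * s - G s)) at_top at_top"
    by (rule filterlim_compose[OF exp_at_top])
next
  assume small: "\<forall>q. 0 < q \<and> q < c \<longrightarrow> ((\<lambda>s. exp (q * s - G s)) \<longlongrightarrow> 0) at_top"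
    and large: "\<forall>q. c < q \<longrightarrow> filterlim (\<lambda>s. exp (q * s - G s)) at_top at_top"
  show "((\<lambda>s. G s / s) \<longlongrightarrow> c) at_top"
  proof (rule order_tendstoI)
    fix b assume "c < b"
    define q where "q = (c + b) / 2"
    have "q < b" "c < q" using \<open>c < b\<close> by (auto simp: q_def)
    then have "eventually (\<lambda>s. 1 \<le> exp (q * s - G s)) at_top"
      using large unfolding filterlim_at_top by blast
    with eventually_gt_at_top[of 0] show "eventually (\<lambda>s. G s / s < b) at_top"
    proof eventually_elim
      case (elim s)
      then have "G s \<le> q * s" by simp
      also have "\<dots> < b * s" using \<open>q < b\<close> elim by simp
      finally show ?case using elim by (simp add: pos_divide_less_eq)
    qed
  next
    fix a assume "a < c"
    define q where "q = max ((a + c) / 2) (c / 2)"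
    have "a < q" "0 < q" "q < c" using \<open>a < c\<close> c by (auto simp: q_def less_max_iff_disj)
    then have "eventually (\<lambda>s. exp (q * s - G s) < 1) at_top"
      using small by (intro order_tendstoD(2)) auto
    with eventually_gt_at_top[of 0] show "eventually (\<lambda>s. a < G s / s) at_top"
    proof eventually_elim
      case (elim s)
      have "a * s < q * s" using \<open>a < q\<close> elim by simp
      also have "\<dots> < G s" using elim by simp
      finally show ?case using elim by (simp add: pos_less_divide_eq)
    qed
  qed
qed

lemma filterlim_at_top_iff_compose_exp:
  fixes h :: "real \<Rightarrow> 'a"
  shows "filterlim h F at_top \<longleftrightarrow> filterlim (\<lambda>s. h (exp s)) F at_top"
  by (metis filterlim_filtermap filtermap_exp_at_top)

lemma tendsto_exp_iff:
  fixes g :: "'a \<Rightarrow> real"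
  shows "((\<lambda>x. exp (g x)) \<longlongrightarrow> exp L) F \<longleftrightarrow> (g \<longlongrightarrow> L) F"
proof
  assume "((\<lambda>x. exp (g x)) \<longlongrightarrow> exp L) F"
  from tendsto_ln[OF this] show "(g \<longlongrightarrow> L) F" by simp
qed (rule tendsto_exp)

lemma power_bounds_iff_log_slope:
  fixes f G :: "real \<Rightarrow> real"
  assumes f: "\<And>s. f (exp s) = exp (- G s)" and "\<gamma> < 1"
  shows "((\<forall>\<gamma>'. \<gamma> < \<gamma>' \<and> \<gamma>' < 1 \<longrightarrow> ((\<lambda>x. f x / x powr (\<gamma>' - 1)) \<longlongrightarrow> 0) at_top) \<and>
          (\<forall>\<gamma>''. \<gamma>'' < \<gamma> \<longrightarrow> filterlim (\<lambda>x. f x / x powr (\<gamma>'' - 1)) at_top at_top))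
     \<longleftrightarrow> ((\<lambda>s. G s / s) \<longlongrightarrow> 1 - \<gamma>) at_top"
proof -
  have "f (exp s) / exp s powr (p - 1) = exp ((1 - p) * s - G s)" for p s
    by (simp add: f powr_def exp_diff [symmetric] algebra_simps)
  then have rewrite: "filterlim (\<lambda>x. f x / x powr (p - 1)) F at_top
      \<longleftrightarrow> filterlim (\<lambda>s. exp ((1 - p) * s - G s)) F at_top" for p F
    by (simp add: filterlim_at_top_iff_compose_exp [of "\<lambda>x. f x / x powr (p - 1)"])
  have reindex: "(\<forall>p. A p \<longrightarrow> P (1 - p)) \<longleftrightarrow> (\<forall>q. A (1 - q) \<longrightarrow> P q)" for A P :: "real \<Rightarrow> bool"
  proof (intro iffI allI impI)
    fix q assume "\<forall>p. A p \<longrightarrow> P (1 - p)" "A (1 - q)"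
    then have "P (1 - (1 - q))" by blast
    then show "P q" by simp
  next
    fix p assume "\<forall>q. A (1 - q) \<longrightarrow> P q" "A p"
    then show "P (1 - p)" by simp
  qed
  have c: "1 - \<gamma> > 0" using \<open>\<gamma> < 1\<close> by simp
  show ?thesis
    unfolding rewrite slope_tendsto_iff_exp_bounds[OF c]
      reindex[where P = "\<lambda>q. ((\<lambda>s. exp (q * s - G s)) \<longlongrightarrow> 0) at_top"]
      reindex[where P = "\<lambda>q. filterlim (\<lambda>s. exp (q * s - G s)) at_top at_top"]
    by (simp add: algebra_simps conj_commute)
qed

lemma regular_variation_iff_log_increments:
  fixes f G :: "real \<Rightarrow> real"
  assumes f: "\<And>s. f (exp s) = exp (- G s)"
  shows "(\<forall>k>0. ((\<lambda>x. f (k * x) / f x) \<longlongrightarrow> k powr (\<gamma> - 1)) at_top)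
     \<longleftrightarrow> (\<forall>a. ((\<lambda>s. G (s + a) - G s) \<longlongrightarrow> (1 - \<gamma>) * a) at_top)"
proof -
  have "f (exp a * exp s) / f (exp s) = exp (- (G (s + a) - G s))" for a s
    by (simp add: f exp_add [symmetric] exp_diff [symmetric] add.commute)
  moreover have "exp a powr (\<gamma> - 1) = exp (- ((1 - \<gamma>) * a))" for a
    by (simp add: powr_def algebra_simps)
  moreover have "((\<lambda>s. G s - G (s + a)) \<longlongrightarrow> - ((1 - \<gamma>) * a)) at_top
      \<longleftrightarrow> ((\<lambda>s. G (s + a) - G s) \<longlongrightarrow> (1 - \<gamma>) * a) at_top" for a
    using tendsto_minus_cancel_left[of "\<lambda>s. G s - G (s + a)" "(1 - \<gamma>) * a" at_top] by simp
  ultimately have "((\<lambda>x. f (exp a * x) / f x) \<longlongrightarrow> exp a powr (\<gamma> - 1)) at_top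
      \<longleftrightarrow> ((\<lambda>s. G (s + a) - G s) \<longlongrightarrow> (1 - \<gamma>) * a) at_top" for a
    by (simp add: filterlim_at_top_iff_compose_exp [of "\<lambda>x. f (exp a * x) / f x"] tendsto_exp_iff)
  moreover have "(\<forall>k>0. P k) \<longleftrightarrow> (\<forall>a. P (exp a))" for P :: "real \<Rightarrow> bool"
    by (metis exp_gt_zero exp_ln)
  ultimately show ?thesis by presburger
qed

lemma power_bounds_iff_regular_variation:
  fixes f G :: "real \<Rightarrow> real"
  assumes f: "\<And>s. f (exp s) = exp (- G s)"
    and "concave_on UNIV G" "mono G" "\<gamma> < 1"
  shows "((\<forall>\<gamma>'. \<gamma> < \<gamma>' \<and> \<gamma>' < 1 \<longrightarrow> ((\<lambda>x. f x / x powr (\<gamma>' - 1)) \<longlongrightarrow> 0) at_top) \<and>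
          (\<forall>\<gamma>''. \<gamma>'' < \<gamma> \<longrightarrow> filterlim (\<lambda>x. f x / x powr (\<gamma>'' - 1)) at_top at_top))
     \<longleftrightarrow> (\<forall>k>0. ((\<lambda>x. f (k * x) / f x) \<longlongrightarrow> k powr (\<gamma> - 1)) at_top)"
  unfolding power_bounds_iff_log_slope[of f G, OF f \<open>\<gamma> < 1\<close>]
    regular_variation_iff_log_increments[of f G, OF f]
    concave_mono_increment_tendsto_iff[OF assms(2,3)] ..

section \<open>The marginal utility and the log-Laplace transform\<close>

lemma strict_concave_on_imp_concave_on:
  fixes U :: "real \<Rightarrow> real"
  assumes "strict_concave_on I U" and "convex I"
  shows "concave_on I U"
proof (rule concave_on_linorderI)
  fix t x y :: real assume "0 < t" "t < 1" "x \<in> I" "y \<in> I" "x < y"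
  then have "(1 - t) * U x + (1 - (1 - t)) * U y < U ((1 - t) * x + (1 - (1 - t)) * y)"
    using assms(1)[unfolded strict_concave_on_def, rule_format, of x y "1 - t"] by simp
  then show "(1 - t) * U x + t * U y \<le> U ((1 - t) *\<^sub>R x + t *\<^sub>R y)" by simp
qed fact

lemma concave_on_le_tangent:
  fixes U :: "real \<Rightarrow> real"
  assumes "concave_on I U" "open I" "convex I" "x \<in> I" "y \<in> I"
    and "(U has_real_derivative U') (at x)"
  shows "U y - U x \<le> U' * (y - x)"
proof -
  have cvx: "convex_on I (\<lambda>x. - U x)" using assms(1) by (simp add: concave_on_def)
  have der: "((\<lambda>x. - U x) has_real_derivative - U') (at x within I)"
    by (rule has_field_derivative_at_within[OF DERIV_minus[OF assms(6)]])
  have int: "x \<in> interior I" using assms(2,4) by (simp add: interior_open)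
  from convex_on_imp_above_tangent[OF cvx convex_connected[OF assms(3)] int assms(5) der]
  show ?thesis by simp
qed

lemma strict_concave_on_deriv_strict_antimono:
  fixes U f :: "real \<Rightarrow> real"
  assumes conc: "strict_concave_on I U" and I: "open I" "convex I"
    and deriv: "\<And>x. x \<in> I \<Longrightarrow> (U has_real_derivative f x) (at x)"
    and xy: "x \<in> I" "y \<in> I" "x < y"
  shows "f y < f x"
proof -
  define m where "m = (x + y) / 2"
  have m: "m \<in> I" "x < m" "m < y" "m - x = y - m"
    using xy convexD[OF I(2) xy(1,2), of "1 / 2" "1 / 2"] by (auto simp: m_def field_simps)
  have "(1 / 2) * U x + (1 - 1 / 2) * U y < U ((1 / 2) * x + (1 - 1 / 2) * y)"
    using conc[unfolded strict_concave_on_def, rule_format, of x y "1 / 2"] xy by simp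
  then have midpoint: "U y - U m < U m - U x" by (simp add: m_def field_simps)
  have concave: "concave_on I U" by (rule strict_concave_on_imp_concave_on[OF conc I(2)])
  have "f y * (y - m) \<le> U y - U m"
    using concave_on_le_tangent[OF concave I xy(2) m(1) deriv[OF xy(2)]] by (simp add: algebra_simps)
  also have "\<dots> < U m - U x" by (rule midpoint)
  also have "\<dots> \<le> f x * (m - x)"
    by (rule concave_on_le_tangent[OF concave I xy(1) m(1) deriv[OF xy(1)]])
  finally show ?thesis using m by simp
qed

lemma strict_mono_concave_on_deriv_pos:
  fixes U :: "real \<Rightarrow> real"
  assumes "strict_mono_on I U" "concave_on I U" "open I" "convex I"
    and "(U has_real_derivative U') (at x)" and "x \<in> I" "y \<in> I" "x < y"
  shows "0 < U'"
proof -
  have "0 < U y - U x" using assms by (simp add: strict_mono_onD)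
  also have "\<dots> \<le> U' * (y - x)" using concave_on_le_tangent assms by blast
  finally show ?thesis using \<open>x < y\<close> by (simp add: zero_less_mult_iff)
qed

lemma integrable_exp_mult_if_integrable_mult_exp:
  fixes M :: "real measure"
  assumes "finite_measure M" "sets M = sets borel" "AE y in M. 0 < y"
    and "integrable M (\<lambda>y. y * exp (y * z))"
  shows "integrable M (\<lambda>y. exp (y * z))"
proof (rule Bochner_Integration.integrable_bound)
  interpret finite_measure M by fact
  show "integrable M (\<lambda>y. y * exp (y * z) + exp \<bar>z\<bar>)"
    using assms(4) by (intro Bochner_Integration.integrable_add) auto
  show "(\<lambda>y. exp (y * z)) \<in> borel_measurable M"
    unfolding measurable_cong_sets[OF assms(2) refl] by measurable
  show "AE y in M. norm (exp (y * z)) \<le> norm (y * exp (y * z) + exp \<bar>z\<bar>)"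
    using assms(3)
  proof eventually_elim
    case (elim y)
    have "exp (y * z) \<le> y * exp (y * z) + exp \<bar>z\<bar>"
    proof (cases "y \<ge> 1")
      case True
      then show ?thesis by (simp add: add_increasing2)
    next
      case False
      have "y * z \<le> \<bar>z\<bar>"
        using elim False abs_ge_self[of z] mult_left_le_one_le[of "\<bar>z\<bar>" y]
        by (smt (verit) mult_left_mono)
      then show ?thesis using elim by (smt (verit) exp_le_cancel_iff mult_pos_pos exp_gt_zero)
    qed
    then show ?case using elim by simp
  qed
qed

lemma integral_exp_mult_pos:
  fixes M :: "real measure"
  assumes "integrable M (\<lambda>y. exp (y * z))" and "emeasure M (space M) \<noteq> 0"
  shows "0 < (\<integral>y. exp (y * z) \<partial>M)"
proof -
  have nonneg: "AE y in M. 0 \<le> exp (y * z)" by simp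
  have "(\<integral>y. exp (y * z) \<partial>M) \<noteq> 0"
  proof
    assume "(\<integral>y. exp (y * z) \<partial>M) = 0"
    then have "AE y in M. False"
      using integral_nonneg_eq_0_iff_AE[OF assms(1) nonneg] by simp
    then show False using assms(2) ae_filter_eq_bot_iff eventually_False by metis
  qed
  moreover have "0 \<le> (\<integral>y. exp (y * z) \<partial>M)" by (rule integral_nonneg_AE[OF nonneg])
  ultimately show ?thesis by linarith
qed

lemma convex_on_ln_integral_exp_mult:
  fixes M :: "real measure"
  assumes int: "\<And>z. integrable M (\<lambda>y. exp (y * z))"
    and pos: "\<And>z. 0 < (\<integral>y. exp (y * z) \<partial>M)"
  shows "convex_on UNIV (\<lambda>z. ln (\<integral>y. exp (y * z) \<partial>M))"
proof (rule convex_onI)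
  fix t a b :: real assume t: "0 < t" "t < 1"
  define g where "g z = (\<integral>y. exp (y * z) \<partial>M)" for z
  \<comment> \<open>Hoelder's inequality, from the pointwise convexity of \<open>exp\<close> after normalising by \<open>g a\<close> and \<open>g b\<close>\<close>
  define K where "K = exp ((1 - t) * ln (g a) + t * ln (g b))"
  have "exp (y * ((1 - t) * a + t * b)) \<le> K * ((1 - t) * exp (y * a) / g a + t * exp (y * b) / g b)" for y
  proof -
    define v w where "v = y * a - ln (g a)" and "w = y * b - ln (g b)"
    have "exp (y * ((1 - t) * a + t * b)) = K * exp ((1 - t) * v + t * w)"
      by (simp add: K_def v_def w_def exp_add [symmetric] algebra_simps)
    also have "\<dots> \<le> K * ((1 - t) * exp v + t * exp w)"
      using convex_onD[OF exp_convex, of t v w] t by (simp add: K_def)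
    also have "\<dots> = K * ((1 - t) * exp (y * a) / g a + t * exp (y * b) / g b)"
      using pos by (simp add: v_def w_def exp_diff g_def)
    finally show ?thesis .
  qed
  then have "g ((1 - t) * a + t * b) \<le> (\<integral>y. K * ((1 - t) * exp (y * a) / g a + t * exp (y * b) / g b) \<partial>M)"
    unfolding g_def by (intro integral_mono int) (use int in auto)
  also have "\<dots> = K * ((1 - t) * g a / g a + t * g b / g b)"
    using int by (simp add: g_def)
  also have "\<dots> = K" using pos[of a] pos[of b] by (simp add: g_def)
  finally have "ln (g ((1 - t) * a + t * b)) \<le> ln K"
    using ln_le_cancel_iff[OF pos[of "(1 - t) * a + t * b", folded g_def], of K] by (simp add: K_def)
  then show "ln (g ((1 - t) *\<^sub>R a + t *\<^sub>R b)) \<le> (1 - t) * ln (g a) + t * ln (g b)"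
    by (simp add: K_def)
qed simp

lemma concave_on_inverse_of_convex_on:
  fixes G H :: "real \<Rightarrow> real"
  assumes "convex_on UNIV H" "mono G" "\<And>z. G (H z) = z" "surj H"
  shows "concave_on UNIV G"
proof (rule concave_on_linorderI)
  fix t x y :: real assume t: "0 < t" "t < 1"
  obtain z w where x: "x = H z" and y: "y = H w" using \<open>surj H\<close> by (metis surjD)
  have "H ((1 - t) * z + t * w) \<le> (1 - t) * x + t * y"
    using convex_onD[OF assms(1), of t z w] t by (simp add: x y)
  then have "(1 - t) * z + t * w \<le> G ((1 - t) * x + t * y)"
    using monoD[OF assms(2)] assms(3) by metis
  then show "(1 - t) * G x + t * G y \<le> G ((1 - t) *\<^sub>R x + t *\<^sub>R y)"
    by (simp add: x y assms(3))
qed simp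

lemma concave_mono_of_inverse_log_convex:
  fixes f g :: "real \<Rightarrow> real"
  assumes f_pos: "\<And>x. 0 < x \<Longrightarrow> 0 < f x"
    and f_antimono: "\<And>x y. 0 < x \<Longrightarrow> x < y \<Longrightarrow> f y < f x"
    and g_pos: "\<And>z. 0 < g z" and convex: "convex_on UNIV (\<lambda>z. ln (g z))"
    and inverse: "\<And>z. f (g z) = exp (- z)"
  shows "concave_on UNIV (\<lambda>s. - ln (f (exp s)))" and "mono (\<lambda>s. - ln (f (exp s)))"
proof -
  show mono: "mono (\<lambda>s. - ln (f (exp s)))"
  proof (rule monoI)
    fix s t :: real assume "s \<le> t"
    then have "f (exp t) \<le> f (exp s)" using f_antimono[of "exp s" "exp t"] by (cases "s = t") auto
    then show "- ln (f (exp s)) \<le> - ln (f (exp t))" using f_pos by simp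
  qed
  have "surj (\<lambda>z. ln (g z))"
  proof (rule surjI)
    fix s
    have "f (g (- ln (f (exp s)))) = f (exp s)" using inverse f_pos by simp
    then have "g (- ln (f (exp s))) = exp s"
      using f_antimono g_pos by (metis exp_gt_zero linorder_neqE_linordered_idom less_irrefl)
    then show "ln (g (- ln (f (exp s)))) = s" by simp
  qed
  moreover have "- ln (f (exp (ln (g z)))) = z" for z using g_pos inverse by simp
  ultimately show "concave_on UNIV (\<lambda>s. - ln (f (exp s)))"
    using concave_on_inverse_of_convex_on[OF convex mono] by blast
qed

theorem lemma5:
  fixes \<mu> :: "real measure"
    and u ux uxx ut :: "real \<Rightarrow> real \<Rightarrow> real"
    and \<gamma> :: real
  assumes mu_borel: "sets \<mu> = sets borel"
    and mu_finite: "finite_measure \<mu>"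
    and mu_support: "emeasure \<mu> {..0} = 0"
    and mu_nonzero: "emeasure \<mu> UNIV \<noteq> 0"
    and mu_int: "\<forall>z. integrable \<mu> (\<lambda>y. y * exp (y * z))"
    and u_smooth: "smooth2_on ({0<..} \<times> {0..}) (\<lambda>(x, t). u x t)"
    and u_x: "\<forall>x>0. \<forall>t\<ge>0. ((\<lambda>x'. u x' t) has_real_derivative ux x t) (at x)"
    and u_xx: "\<forall>x>0. \<forall>t\<ge>0. ((\<lambda>x'. ux x' t) has_real_derivative uxx x t) (at x)"
    and u_t: "\<forall>x>0. \<forall>t\<ge>0. ((\<lambda>t'. u x t') has_real_derivative ut x t) (at t within {0..})"
    and u_incr: "\<forall>t\<ge>0. strict_mono_on {0<..} (\<lambda>x. u x t)"
    and u_conc: "\<forall>t\<ge>0. strict_concave_on {0<..} (\<lambda>x. u x t)"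
    and u_pde: "\<forall>x>0. \<forall>t\<ge>0. ut x t = (1/2) * (ux x t)\<^sup>2 / uxx x t"
    and u_h: "\<forall>z. \<forall>t\<ge>0. ux (hfun \<mu> z t) t = exp (- z + t / 2)"
    and gamma: "\<gamma> < 1" "\<gamma> \<noteq> 0"
  shows "((\<forall>\<gamma>'. \<gamma> < \<gamma>' \<and> \<gamma>' < 1 \<longrightarrow>
              ((\<lambda>x. ux x 0 / x powr (\<gamma>' - 1)) \<longlongrightarrow> 0) at_top) \<and>
          (\<forall>\<gamma>''. \<gamma>'' < \<gamma> \<longrightarrow>
              filterlim (\<lambda>x. ux x 0 / x powr (\<gamma>'' - 1)) at_top at_top))
     \<longleftrightarrow>
         (\<forall>k>0. ((\<lambda>x. ux (k * x) 0 / ux x 0) \<longlongrightarrow> k powr (\<gamma> - 1)) at_top)"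
proof -
  define f where "f x = ux x 0" for x
  define g where "g z = (\<integral>y. exp (y * z) \<partial>\<mu>)" for z
  have U: "strict_mono_on {0<..} (\<lambda>x. u x 0)" "strict_concave_on {0<..} (\<lambda>x. u x 0)"
    "\<And>x. 0 < x \<Longrightarrow> ((\<lambda>x. u x 0) has_real_derivative f x) (at x)"
    using u_incr u_conc u_x by (simp_all add: f_def)
  have f_pos: "0 < f x" if "0 < x" for x
    using strict_mono_concave_on_deriv_pos[OF U(1) strict_concave_on_imp_concave_on[OF U(2)]
        _ _ U(3)[OF that], of "x + 1"] that by simp
  have f_antimono: "f y < f x" if "0 < x" "x < y" for x y
    using strict_concave_on_deriv_strict_antimono[OF U(2) _ _ U(3)] that by simp
  have "AE y in \<mu>. 0 < y"
    by (rule AE_I'[of "{..0}"]) (use mu_support mu_borel in \<open>auto simp: null_sets_def\<close>)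
  then have int: "integrable \<mu> (\<lambda>y. exp (y * z))" for z
    using integrable_exp_mult_if_integrable_mult_exp[OF mu_finite mu_borel] mu_int by blast
  have g_pos: "0 < g z" for z
    using integral_exp_mult_pos[OF int] mu_nonzero sets_eq_imp_space_eq[OF mu_borel] by (simp add: g_def)
  have inverse: "f (g z) = exp (- z)" for z
  proof -
    have "ux (hfun \<mu> z 0) 0 = exp (- z + 0 / 2)" using u_h by blast
    then show ?thesis by (simp add: f_def g_def hfun_def)
  qed
  define G where "G s = - ln (f (exp s))" for s
  from concave_mono_of_inverse_log_convex[OF f_pos f_antimono g_pos _ inverse]
  have "concave_on UNIV G" "mono G"
    using convex_on_ln_integral_exp_mult[OF int g_pos[unfolded g_def]]
    unfolding G_def [abs_def] by (simp_all add: g_def)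
  moreover have "f (exp s) = exp (- G s)" for s
    using f_pos by (simp add: G_def)
  ultimately show ?thesis
    using power_bounds_iff_regular_variation[of f G, OF _ _ _ gamma(1)] unfolding f_def by blast
qed

end
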